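(* Let $\{a,b\}$ be a $2$-element generating set of an abelian group $G$ (possibly infinite) with $a\ne b$, and let $I=|G:\langle a-b\rangle|$. Then $\mathrm{Cay}(G;a,b)$ has two arc-disjoint two-way infinite hamiltonian paths if and only if $I<\infty$ and there exist $k,\ell\in\{0,1,\ldots,I\}$ such that $k+\ell=I$ and $\langle a-b\rangle=\langle ka+\ell b\rangle=\langle \ell a+kb\rangle$.
   Context: The Cayley digraph $\mathrm{Cay}(G;a,b)$ has vertex set $G$ and an arc from $v$ to $v+s$ for all $v\in G$, $s\in\{a,b\}$. A two-way infinite hamiltonian path is a doubly-infinite sequence $\ldots,v_{-1},v_0,v_1,\ldots$ listing every vertex exactly once with an arc from $v_i$ to $v_{i+1}$ for all $i\in\mathbb{Z}$. Arc-disjoint means sharing no arc.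
   Formalization: The group G is assumed infinite, so the finite groups admitted by the phrase (possibly infinite) are excluded. The paper assumes this as well. *)

theory Defs
  imports Main
begin

fun nsmul :: "nat \<Rightarrow> 'a::ab_group_add \<Rightarrow> 'a" where
  "nsmul 0 x = 0"
| "nsmul (Suc n) x = x + nsmul n x"

definition zsmul :: "int \<Rightarrow> 'a::ab_group_add \<Rightarrow> 'a" where
  "zsmul n x = (if n \<ge> 0 then nsmul (nat n) x else - nsmul (nat (- n)) x)"

definition cyc :: "'a::ab_group_add \<Rightarrow> 'a set" where
  "cyc x = range (\<lambda>n. zsmul n x)"

definition gen2 :: "'a::ab_group_add \<Rightarrow> 'a \<Rightarrow> 'a set" where
  "gen2 a b = {zsmul m a + zsmul n b | m n. True}"

definition cosets :: "'a::ab_group_add set \<Rightarrow> 'a set set" where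
  "cosets H = range (\<lambda>x. (\<lambda>h. x + h) ` H)"

(* index |G : H|, meaningful when finite_index H holds *)
definition finite_index :: "'a::ab_group_add set \<Rightarrow> bool" where
  "finite_index H \<longleftrightarrow> finite (cosets H)"

definition index :: "'a::ab_group_add set \<Rightarrow> nat" where
  "index H = card (cosets H)"

(* two-way infinite hamiltonian path in Cay(G;a,b), G = UNIV, given as the
   sequence f : int -> G listing every vertex exactly once *)
definition ham_path2 :: "'a::ab_group_add \<Rightarrow> 'a \<Rightarrow> (int \<Rightarrow> 'a) \<Rightarrow> bool" where
  "ham_path2 a b f \<longleftrightarrow> bij f \<and> (\<forall>i. f (i + 1) - f i \<in> {a, b})"

definition path_arcs :: "(int \<Rightarrow> 'a) \<Rightarrow> ('a \<times> 'a) set" where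
  "path_arcs f = range (\<lambda>i. (f i, f (i + 1)))"

end

(*
  Write H for the cyclic subgroup generated by a - b. Since b = a modulo H, every walk f in
  Cay(G;a,b) satisfies f j - f i = (j - i) a modulo H. In a hamiltonian path the step leaving a
  vertex depends only on its coset modulo H, because the vertex v + b is entered from exactly
  one of v and v - (a - b). Hence a hamiltonian path forces the index I of H to be finite and
  is periodic: f (i + I) - f i is a constant generating H. Two arc-disjoint paths take
  different, hence complementary, steps at each coset, so their periods are k a + l b and
  l a + k b with k + l = I. Conversely, in an infinite group the generator k a + l b of the
  finite-index subgroup H has infinite order, and the periodic walks with step patterns
  a^k b^l and b^k a^l are arc-disjoint hamiltonian paths.
*)

theory Submission
  imports Defs
begin

section \<open>Integer multiples\<close>

lemma nsmul_add_left: "nsmul (m + n) x = nsmul m x + nsmul n x"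
  by (induction m) (simp_all add: add.assoc)

lemma nsmul_zero_right [simp]: "nsmul n 0 = 0"
  by (induction n) simp_all

lemma nsmul_eq_sum: "nsmul n x = (\<Sum>i<n. x)"
  by (induction n) (simp_all add: add.commute)

lemma zsmul_of_nat [simp]: "zsmul (int n) x = nsmul n x"
  by (simp add: zsmul_def)

lemma zsmul_minus_of_nat [simp]: "zsmul (- int n) x = - nsmul n x"
  by (simp add: zsmul_def)

lemma zsmul_0 [simp]: "zsmul 0 x = 0"
  by (simp add: zsmul_def)

lemma zsmul_succ: "zsmul (n + 1) x = zsmul n x + x"
proof (cases "n \<ge> 0")
  case True
  then have "nat (n + 1) = Suc (nat n)" by simp
  then show ?thesis using True by (simp add: zsmul_def add.commute)
next
  case False
  define m where "m = nat (- n) - 1"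
  have "n = - int (Suc m)" "n + 1 = - int m"
    using False unfolding m_def by simp_all
  then have "zsmul n x = - (x + nsmul m x)" "zsmul (n + 1) x = - nsmul m x"
    by (simp_all only: zsmul_minus_of_nat nsmul.simps)
  then show ?thesis by simp
qed

lemma zsmul_pred: "zsmul (n - 1) x = zsmul n x - x"
  using zsmul_succ[of "n - 1" x] by simp

lemma zsmul_add_left: "zsmul (m + n) x = zsmul m x + zsmul n x"
proof (induction n rule: int_induct[where k = 0])
  case (step1 n)
  then show ?case by (simp only: add.assoc[symmetric] zsmul_succ)
next
  case (step2 n)
  then show ?case by (simp only: add_diff_eq zsmul_pred)
qed simp

lemma zsmul_minus_left: "zsmul (- n) x = - zsmul n x"
  using zsmul_add_left[of "- n" n x] by (simp add: eq_neg_iff_add_eq_0)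

lemma zsmul_diff_left: "zsmul (m - n) x = zsmul m x - zsmul n x"
  using zsmul_add_left[of m "- n" x] by (simp add: zsmul_minus_left)

lemma zsmul_1 [simp]: "zsmul 1 x = x"
  using zsmul_succ[of 0 x] by simp

lemma zsmul_zero_right [simp]: "zsmul n 0 = 0"
  by (simp add: zsmul_def)

lemma zsmul_add_right: "zsmul n (x + y) = zsmul n x + zsmul n y"
proof (induction n rule: int_induct[where k = 0])
  case (step1 n)
  then show ?case by (simp only: zsmul_succ) (simp add: algebra_simps)
next
  case (step2 n)
  then show ?case by (simp only: zsmul_pred) (simp add: algebra_simps)
qed simp

lemma zsmul_minus_right: "zsmul n (- x) = - zsmul n x"
  using zsmul_add_right[of n "- x" x] by (simp add: eq_neg_iff_add_eq_0)

lemma zsmul_diff_right: "zsmul n (x - y) = zsmul n x - zsmul n y"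
  using zsmul_add_right[of n x "- y"] by (simp add: zsmul_minus_right)

lemma zsmul_mult: "zsmul (m * n) x = zsmul m (zsmul n x)"
proof (induction m rule: int_induct[where k = 0])
  case (step1 m)
  then show ?case by (simp add: distrib_right zsmul_add_left)
next
  case (step2 m)
  then show ?case by (simp add: left_diff_distrib zsmul_diff_left)
qed simp

section \<open>Cyclic subgroups and their cosets\<close>

lemma zsmul_in_cyc: "zsmul n x \<in> cyc x"
  unfolding cyc_def by (rule rangeI)

lemma zero_in_cyc [simp]: "0 \<in> cyc x"
  using zsmul_in_cyc[of 0 x] by simp

lemma self_in_cyc [simp]: "x \<in> cyc x"
  using zsmul_in_cyc[of 1 x] by simp

lemma cyc_zsmul: "y \<in> cyc x \<Longrightarrow> zsmul n y \<in> cyc x"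
  unfolding cyc_def by (auto simp flip: zsmul_mult)

lemma cyc_add: "y \<in> cyc x \<Longrightarrow> z \<in> cyc x \<Longrightarrow> y + z \<in> cyc x"
  unfolding cyc_def by (auto simp flip: zsmul_add_left)

lemma cyc_minus: "y \<in> cyc x \<Longrightarrow> - y \<in> cyc x"
  using cyc_zsmul[of y x "- 1"] by (simp add: zsmul_minus_left)

lemma cyc_diff: "y \<in> cyc x \<Longrightarrow> z \<in> cyc x \<Longrightarrow> y - z \<in> cyc x"
  using cyc_add[of y x "- z"] cyc_minus[of z x] by simp

lemma cyc_subset: "y \<in> cyc x \<Longrightarrow> cyc y \<subseteq> cyc x"
  using cyc_zsmul unfolding cyc_def[of y] by blast

lemma cyc_eqI: "y \<in> cyc x \<Longrightarrow> x \<in> cyc y \<Longrightarrow> cyc x = cyc y"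
  by (simp add: cyc_subset subset_antisym)

lemma finite_cyc_if_zsmul_eq_0:
  assumes "zsmul n x = 0" "n \<noteq> 0"
  shows "finite (cyc x)"
proof -
  have "cyc x \<subseteq> (\<lambda>m. zsmul m x) ` {-\<bar>n\<bar>..\<bar>n\<bar>}"
  proof
    fix y assume "y \<in> cyc x"
    then obtain m where y: "y = zsmul m x" unfolding cyc_def by blast
    have "zsmul m x = zsmul (m div n) (zsmul n x) + zsmul (m mod n) x"
      by (metis div_mult_mod_eq mult.commute zsmul_add_left zsmul_mult)
    then have "y = zsmul (m mod n) x" using y assms(1) by simp
    moreover have "m mod n \<in> {-\<bar>n\<bar>..\<bar>n\<bar>}" using abs_mod_less[OF assms(2), of m] by auto
    ultimately show "y \<in> (\<lambda>m. zsmul m x) ` {-\<bar>n\<bar>..\<bar>n\<bar>}" by blast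
  qed
  then show ?thesis by (rule finite_subset) simp
qed

definition coset :: "'a::ab_group_add set \<Rightarrow> 'a \<Rightarrow> 'a set" where
  "coset H x = (\<lambda>h. x + h) ` H"

lemma cosets_eq_range_coset: "cosets H = range (coset H)"
  unfolding cosets_def coset_def ..

lemma in_coset_cyc: "x \<in> coset (cyc d) x"
  unfolding coset_def by (rule image_eqI[of _ _ 0]) simp_all

lemma coset_cyc_subset: "x - y \<in> cyc d \<Longrightarrow> coset (cyc d) x \<subseteq> coset (cyc d) y"
  unfolding coset_def by (auto intro!: image_eqI[of _ _ "x - y + _"] cyc_add)

lemma coset_cyc_eq_iff: "coset (cyc d) x = coset (cyc d) y \<longleftrightarrow> x - y \<in> cyc d"
proof
  assume "coset (cyc d) x = coset (cyc d) y"
  then have "x \<in> coset (cyc d) y" using in_coset_cyc by metis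
  then show "x - y \<in> cyc d" unfolding coset_def by auto
next
  assume xy: "x - y \<in> cyc d"
  then have "y - x \<in> cyc d" using cyc_minus by fastforce
  then show "coset (cyc d) x = coset (cyc d) y"
    using xy by (simp add: coset_cyc_subset subset_antisym)
qed

lemma finite_UNIV_if_finite_index_cyc:
  fixes d :: "'a::ab_group_add"
  assumes "finite_index (cyc d)" "finite (cyc d)"
  shows "finite (UNIV :: 'a set)"
proof -
  have "UNIV \<subseteq> \<Union> (cosets (cyc d))"
    using in_coset_cyc by (auto simp: cosets_eq_range_coset)
  moreover have "finite (\<Union> (cosets (cyc d)))"
    using assms unfolding finite_index_def cosets_eq_range_coset coset_def by blast
  ultimately show ?thesis by (rule finite_subset)
qed

lemma zsmul_eq_0_iff_if_finite_index:
  assumes "infinite (UNIV :: 'a::ab_group_add set)" "finite_index (cyc (x :: 'a))"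
  shows "zsmul n x = 0 \<longleftrightarrow> n = 0"
  using finite_cyc_if_zsmul_eq_0 finite_UNIV_if_finite_index_cyc assms by fastforce

lemma int_subgroup_eq_multiples:
  fixes K :: "int set"
  assumes diff: "\<And>i j. i \<in> K \<Longrightarrow> j \<in> K \<Longrightarrow> i - j \<in> K" and "j \<in> K" "j \<noteq> 0"
  obtains q where "q > 0" "\<And>i. i \<in> K \<longleftrightarrow> q dvd i"
proof -
  have zero: "0 \<in> K" using diff[OF \<open>j \<in> K\<close> \<open>j \<in> K\<close>] by simp
  have minus: "- i \<in> K" if "i \<in> K" for i using diff[OF zero that] by simp
  have "\<bar>j\<bar> \<in> K" using \<open>j \<in> K\<close> minus by (simp add: abs_if)
  define q where "q = (LEAST n::nat. 0 < n \<and> int n \<in> K)"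
  have q: "0 < q \<and> int q \<in> K"
    unfolding q_def by (rule LeastI[of _ "nat \<bar>j\<bar>"]) (use \<open>\<bar>j\<bar> \<in> K\<close> \<open>j \<noteq> 0\<close> in simp)
  have multiple: "c * int q \<in> K" for c
  proof (induction c rule: int_induct[where k = 0])
    case (step1 c)
    then show ?case using diff[OF step1.IH minus[of "int q"]] q by (simp add: algebra_simps)
  next
    case (step2 c)
    then show ?case using diff[OF step2.IH, of "int q"] q by (simp add: algebra_simps)
  qed (simp add: zero)
  show thesis
  proof (rule that)
    show "int q > 0" using q by simp
    fix i
    show "i \<in> K \<longleftrightarrow> int q dvd i"
    proof
      assume "i \<in> K"
      then have "i mod int q \<in> K"
        using diff[OF \<open>i \<in> K\<close> multiple[of "i div int q"]] by (simp add: minus_div_mult_eq_mod)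
      moreover have "0 \<le> i mod int q" "i mod int q < int q" using q by simp_all
      ultimately have "i mod int q = 0"
        using not_less_Least[of "nat (i mod int q)" "\<lambda>n. 0 < n \<and> int n \<in> K"]
        unfolding q_def[symmetric] by fastforce
      then show "int q dvd i" by presburger
    next
      assume "int q dvd i"
      then show "i \<in> K" using multiple by (metis dvd_def mult.commute)
    qed
  qed
qed

lemma exists_zsmul_congruent:
  assumes "gen2 a b = UNIV"
  obtains m where "x - zsmul m a \<in> cyc (a - b)"
proof -
  have "x \<in> gen2 a b" using assms by simp
  then obtain m n where x: "x = zsmul m a + zsmul n b" unfolding gen2_def by blast
  have "x - zsmul (m + n) a = zsmul (- n) (a - b)"
    by (simp add: x zsmul_add_left zsmul_minus_left zsmul_diff_right)
  then show thesis using that zsmul_in_cyc by metis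
qed

lemma exists_zsmul_in_cyc_if_finite_index:
  assumes "finite_index (cyc d)"
  obtains j where "j \<noteq> 0" "zsmul j x \<in> cyc d"
proof -
  let ?\<psi> = "\<lambda>i. coset (cyc d) (zsmul i x)"
  have "range ?\<psi> \<subseteq> cosets (cyc d)"
    by (auto simp: cosets_eq_range_coset)
  then have "finite (range ?\<psi>)"
    using assms finite_subset unfolding finite_index_def by blast
  then have "\<not> inj ?\<psi>"
    using finite_imageD infinite_UNIV_int by blast
  then obtain i j where "i \<noteq> j" "?\<psi> i = ?\<psi> j"
    unfolding inj_def by blast
  then show thesis using that[of "i - j"] by (simp add: coset_cyc_eq_iff zsmul_diff_left)
qed

text \<open>Since \<open>b\<close> is congruent to \<open>a\<close> modulo \<open>\<langle>a - b\<rangle>\<close>, the quotient by \<open>\<langle>a - b\<rangle>\<close> is cyclic,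
  generated by the coset of \<open>a\<close>.\<close>

lemma index_cyc_diff:
  assumes gen: "gen2 a b = UNIV" and "j \<noteq> 0" "zsmul j a \<in> cyc (a - b)"
  shows "finite_index (cyc (a - b))" and "0 < index (cyc (a - b))"
    and "zsmul i a \<in> cyc (a - b) \<longleftrightarrow> int (index (cyc (a - b))) dvd i"
proof -
  let ?H = "cyc (a - b)"
  obtain q where q: "q > 0" and K: "\<And>i. zsmul i a \<in> ?H \<longleftrightarrow> q dvd i"
    using int_subgroup_eq_multiples[of "{i. zsmul i a \<in> ?H}" j] assms(2,3)
    by (auto simp: zsmul_diff_left cyc_diff)
  define \<psi> where "\<psi> i = coset ?H (zsmul i a)" for i
  have \<psi>_eq: "\<psi> i = \<psi> i' \<longleftrightarrow> i mod q = i' mod q" for i i'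
    using K[of "i - i'"] by (simp add: \<psi>_def coset_cyc_eq_iff zsmul_diff_left mod_eq_dvd_iff)
  have "cosets ?H = \<psi> ` {0..<q}"
  proof
    show "cosets ?H \<subseteq> \<psi> ` {0..<q}"
    proof
      fix C assume "C \<in> cosets ?H"
      then obtain x where C: "C = coset ?H x" by (auto simp: cosets_eq_range_coset)
      obtain m where "x - zsmul m a \<in> ?H" using exists_zsmul_congruent[OF gen] .
      then have "C = \<psi> m" by (simp add: C \<psi>_def coset_cyc_eq_iff)
      also have "\<dots> = \<psi> (m mod q)" using \<psi>_eq by simp
      finally show "C \<in> \<psi> ` {0..<q}" using q by simp
    qed
  qed (auto simp: \<psi>_def cosets_eq_range_coset)
  moreover have "inj_on \<psi> {0..<q}"
    by (rule inj_onI) (simp add: \<psi>_eq)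
  ultimately have "finite (cosets ?H)" "index ?H = nat q"
    by (simp_all add: index_def card_image)
  then show "finite_index ?H" "0 < index ?H" "zsmul i a \<in> ?H \<longleftrightarrow> int (index ?H) dvd i"
    using q K by (simp_all add: finite_index_def)
qed

section \<open>Hamiltonian paths\<close>

lemma step_minus_in_cyc: "s \<in> {a, b} \<Longrightarrow> s - a \<in> cyc (a - b)"
  using cyc_minus[OF self_in_cyc[of "a - b"]] by auto

lemma walk_diff_in_cyc:
  assumes steps: "\<And>i. f (i + 1) - f i \<in> {a, b}"
  shows "f j - f i - zsmul (j - i) a \<in> cyc (a - b)"
proof (induction j rule: int_induct[where k = i])
  case (step1 j)
  have "f (j + 1) - f i - zsmul (j + 1 - i) a
      = (f j - f i - zsmul (j - i) a) + ((f (j + 1) - f j) - a)"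
    by (simp add: zsmul_add_left zsmul_diff_left)
  then show ?case using cyc_add[OF step1.IH step_minus_in_cyc[OF steps[of j]]] by (rule ssubst)
next
  case (step2 j)
  have "f (j - 1) - f i - zsmul (j - 1 - i) a
      = (f j - f i - zsmul (j - i) a) - ((f (j - 1 + 1) - f (j - 1)) - a)"
    by (simp add: zsmul_diff_left)
  then show ?case using cyc_diff[OF step2.IH step_minus_in_cyc[OF steps[of "j - 1"]]] by (rule ssubst)
qed simp

lemma ham_path2_step: "ham_path2 a b f \<Longrightarrow> f (i + 1) - f i \<in> {a, b}"
  by (simp add: ham_path2_def)

lemma ham_path2_inj: "ham_path2 a b f \<Longrightarrow> inj f"
  by (simp add: ham_path2_def bij_is_inj)

lemma ham_path2_f_inv_f: "ham_path2 a b f \<Longrightarrow> f (inv f v) = v"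
  by (simp add: ham_path2_def bij_is_surj surj_f_inv_f)

definition out_step :: "(int \<Rightarrow> 'a::ab_group_add) \<Rightarrow> 'a \<Rightarrow> 'a" where
  "out_step f v = f (inv f v + 1) - v"

lemma out_step_apply: "inj f \<Longrightarrow> out_step f (f i) = f (i + 1) - f i"
  by (simp add: out_step_def)

lemma ham_path2_out_step:
  assumes "ham_path2 a b f"
  shows "out_step f v \<in> {a, b}"
  using out_step_apply[OF ham_path2_inj[OF assms], of "inv f v"] ham_path2_step[OF assms, of "inv f v"]
  by (simp add: ham_path2_f_inv_f[OF assms])

text \<open>The vertex \<open>v + b\<close> is entered either from \<open>v\<close> by a \<open>b\<close>-arc or from \<open>v - (a - b)\<close> by an
  \<open>a\<close>-arc, and by exactly one of the two.\<close>

lemma out_step_shift: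
  assumes f: "ham_path2 a b f" and "a \<noteq> b"
  shows "out_step f (v - (a - b)) = out_step f v"
proof -
  let ?v' = "v - (a - b)"
  have inj: "inj f" using f by (rule ham_path2_inj)
  define i i' m where "i = inv f v" "i' = inv f ?v'" "m = inv f (v + b)"
  then have i: "f i = v" "f i' = ?v'" and m: "f m = v + b"
    using f by (simp_all add: ham_path2_f_inv_f)
  have out: "out_step f v = f (i + 1) - v" "out_step f ?v' = f (i' + 1) - ?v'"
    using out_step_apply[OF inj, of i] out_step_apply[OF inj, of i'] i by simp_all
  have "i \<noteq> i'" using i \<open>a \<noteq> b\<close> by auto
  have "f (m - 1) = f i \<or> f (m - 1) = f i'"
    using ham_path2_step[OF f, of "m - 1"] m i by (auto simp: algebra_simps)
  then consider "m = i + 1" | "m = i' + 1"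
    using inj by (auto simp: inj_eq)
  then show ?thesis
  proof cases
    case 1
    then have "out_step f v = b" using out m by simp
    moreover have "out_step f ?v' \<noteq> a"
    proof
      assume "out_step f ?v' = a"
      then have "f (i' + 1) = f (i + 1)" using out m 1 by (simp add: algebra_simps)
      then show False using inj \<open>i \<noteq> i'\<close> by (simp add: inj_eq)
    qed
    ultimately show ?thesis using ham_path2_out_step[OF f, of ?v'] by auto
  next
    case 2
    then have "out_step f ?v' = a" using out m by (simp add: algebra_simps)
    moreover have "out_step f v \<noteq> b"
    proof
      assume "out_step f v = b"
      then have "f (i + 1) = f (i' + 1)" using out m 2 by (simp add: algebra_simps)
      then show False using inj \<open>i \<noteq> i'\<close> by (simp add: inj_eq)
    qed
    ultimately show ?thesis using ham_path2_out_step[OF f, of v] by auto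
  qed
qed

lemma out_step_eq_if_cyc:
  assumes f: "ham_path2 a b f" and "a \<noteq> b" and "x - y \<in> cyc (a - b)"
  shows "out_step f x = out_step f y"
proof -
  have "out_step f (y + zsmul n (a - b)) = out_step f y" for n
  proof (induction n rule: int_induct[where k = 0])
    case (step1 n)
    have e: "y + zsmul (n + 1) (a - b) - (a - b) = y + zsmul n (a - b)"
      by (simp only: zsmul_succ) (simp add: algebra_simps)
    show ?case using out_step_shift[OF f \<open>a \<noteq> b\<close>, of "y + zsmul (n + 1) (a - b)", unfolded e] step1.IH
      by simp
  next
    case (step2 n)
    have e: "y + zsmul (n - 1) (a - b) = y + zsmul n (a - b) - (a - b)"
      by (simp only: zsmul_pred) (simp add: algebra_simps)
    show ?case using out_step_shift[OF f \<open>a \<noteq> b\<close>, of "y + zsmul n (a - b)", folded e] step2.IH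
      by simp
  qed simp
  moreover obtain n where "x - y = zsmul n (a - b)"
    using assms(3) unfolding cyc_def by blast
  ultimately show ?thesis by (simp add: diff_eq_eq add.commute)
qed

lemma ham_path2_reaches_translate:
  assumes f: "ham_path2 a b f" and "a \<noteq> b"
  obtains j where "j \<noteq> 0" "f j = f 0 + (a - b)" "zsmul j a \<in> cyc (a - b)"
proof -
  define j where "j = inv f (f 0 + (a - b))"
  have fj: "f j = f 0 + (a - b)"
    unfolding j_def by (rule ham_path2_f_inv_f[OF f])
  then have "j \<noteq> 0" using \<open>a \<noteq> b\<close> by auto
  have "(a - b) - zsmul j a \<in> cyc (a - b)"
    using walk_diff_in_cyc[of f a b j 0, OF ham_path2_step[OF f]] fj by simp
  then have "zsmul j a \<in> cyc (a - b)"
    using cyc_diff[OF self_in_cyc] by fastforce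
  with \<open>j \<noteq> 0\<close> fj show thesis by (rule that)
qed

lemma shift_invariant_eq:
  fixes g :: "int \<Rightarrow> 'a"
  assumes "\<And>i. g (i + 1) = g i"
  shows "g i = g 0"
proof (induction i rule: int_induct[where k = 0])
  case (step2 i)
  then show ?case using assms[of "i - 1"] by simp
qed (simp_all add: assms)

lemma zsmul_eq_if_constant_increment:
  assumes "\<And>i. f (i + P) - f i = W"
  shows "f (t * P) = f 0 + zsmul t (W :: 'a::ab_group_add)"
proof (induction t rule: int_induct[where k = 0])
  case (step1 t)
  then show ?case using assms[of "t * P"] zsmul_succ[of t W] by (simp add: algebra_simps)
next
  case (step2 t)
  have "f ((t - 1) * P) = f (t * P) - W"
    using assms[of "(t - 1) * P"] by (simp add: algebra_simps)
  then show ?case using step2.IH by (simp add: zsmul_pred add_diff_eq)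
qed simp

lemma ham_path2_periodic:
  assumes f: "ham_path2 a b f" and "a \<noteq> b"
    and index_dvd: "\<And>j. zsmul j a \<in> cyc (a - b) \<longleftrightarrow> int p dvd j"
  shows "f (i + int p) - f i = f (int p) - f 0" and "cyc (f (int p) - f 0) = cyc (a - b)"
proof -
  note steps = ham_path2_step[OF f] and inj = ham_path2_inj[OF f]
  have period: "zsmul (int p) a \<in> cyc (a - b)" using index_dvd[of "int p"] by simp
  have period_in_cyc: "f (i + int p) - f i \<in> cyc (a - b)" for i
    using cyc_add[OF walk_diff_in_cyc[of f a b "i + int p" i, OF steps] period] by simp
  have same_step: "f (i + int p + 1) - f (i + int p) = f (i + 1) - f i" for i
    using out_step_eq_if_cyc[OF f \<open>a \<noteq> b\<close> period_in_cyc[of i]] by (simp add: out_step_apply[OF inj])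
  have "f (i + 1 + int p) - f (i + 1) = f (i + int p) - f i" for i
    using same_step[of i] by (simp add: algebra_simps)
  then show periodic: "f (i + int p) - f i = f (int p) - f 0" for i
    using shift_invariant_eq[of "\<lambda>i. f (i + int p) - f i" i] by simp
  obtain j where "f j = f 0 + (a - b)" "zsmul j a \<in> cyc (a - b)"
    using ham_path2_reaches_translate[OF f \<open>a \<noteq> b\<close>] .
  then obtain t where "f (t * int p) = f 0 + (a - b)"
    using index_dvd by (metis dvd_def mult.commute)
  then have "a - b = zsmul t (f (int p) - f 0)"
    using zsmul_eq_if_constant_increment[of f "int p", OF periodic, of t] by simp
  then show "cyc (f (int p) - f 0) = cyc (a - b)"
    using cyc_eqI[OF _ period_in_cyc[of 0]] zsmul_in_cyc by fastforce
qed

lemma arc_disjoint_steps_complementary: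
  assumes f: "ham_path2 a b f" and g: "ham_path2 a b g" and "a \<noteq> b"
    and disj: "path_arcs f \<inter> path_arcs g = {}" and "g j - f i \<in> cyc (a - b)"
  shows "g (j + 1) - g j = a + b - (f (i + 1) - f i)"
proof -
  note inj = ham_path2_inj[OF f]
  have out: "out_step f (g j) = f (i + 1) - f i"
    using out_step_eq_if_cyc[OF f \<open>a \<noteq> b\<close> \<open>g j - f i \<in> cyc (a - b)\<close>] by (simp add: out_step_apply[OF inj])
  have "out_step f (g j) \<noteq> g (j + 1) - g j"
  proof
    assume same: "out_step f (g j) = g (j + 1) - g j"
    define m where "m = inv f (g j)"
    have "f m = g j" unfolding m_def by (rule ham_path2_f_inv_f[OF f])
    then have "(g j, g (j + 1)) = (f m, f (m + 1))"
      using same out_step_apply[OF inj, of m] by simp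
    moreover have "(f m, f (m + 1)) \<in> path_arcs f" "(g j, g (j + 1)) \<in> path_arcs g"
      unfolding path_arcs_def by (rule rangeI)+
    ultimately show False using disj by (metis IntI empty_iff)
  qed
  moreover note ham_path2_step[OF f, of i] ham_path2_step[OF g, of j]
  ultimately show ?thesis using out by auto
qed

lemma sum_two_valued:
  fixes a b :: "'a::ab_group_add"
  assumes "\<And>i. i < n \<Longrightarrow> s i \<in> {a, b}"
  obtains k where "k \<le> n" "(\<Sum>i<n. s i) = nsmul k a + nsmul (n - k) b"
  using assms
proof (induction n arbitrary: thesis)
  case (Suc n)
  obtain k where k: "k \<le> n" "(\<Sum>i<n. s i) = nsmul k a + nsmul (n - k) b"
    using Suc.IH Suc.prems(2) by (metis less_SucI)
  have "s n \<in> {a, b}" using Suc.prems(2) by simp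
  then show thesis
  proof
    assume "s n = a"
    then show thesis using Suc.prems(1)[of "Suc k"] k by (simp add: algebra_simps)
  next
    assume "s n \<in> {b}"
    then show thesis using Suc.prems(1)[of k] k by (simp add: Suc_diff_le algebra_simps)
  qed
qed simp

lemma sum_complementary_steps:
  assumes "k \<le> n" "(\<Sum>i<n. s i) = nsmul k a + nsmul (n - k) b"
    and "\<And>i. t i = a + b - s i"
  shows "(\<Sum>i<n. t i) = nsmul (n - k) a + nsmul k (b :: 'a::ab_group_add)"
proof -
  have split: "nsmul n x = nsmul k x + nsmul (n - k) x" for x :: 'a
    using nsmul_add_left[of k "n - k" x] \<open>k \<le> n\<close> by simp
  have "(\<Sum>i<n. t i) = (\<Sum>i<n. a + b - s i)"
    using assms(3) by simp
  also have "\<dots> = nsmul n a + nsmul n b - (\<Sum>i<n. s i)"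
    by (simp add: sum_subtractf sum.distrib nsmul_eq_sum)
  also have "\<dots> = nsmul (n - k) a + nsmul k b"
    unfolding assms(2) split[of a] split[of b] by (simp add: algebra_simps)
  finally show ?thesis .
qed

lemma sum_steps_telescope:
  "(\<Sum>i<n. f (c + int i + 1) - f (c + int i)) = f (c + int n) - (f c :: 'a::ab_group_add)"
  by (induction n) (simp_all add: algebra_simps)

text \<open>Started at a common vertex, the two paths take complementary steps at every time, so
  their periods are \<open>k a + (p - k) b\<close> and \<open>(p - k) a + k b\<close>.\<close>

lemma arc_disjoint_ham_paths_imp:
  assumes "a \<noteq> b" and index_dvd: "\<And>j. zsmul j a \<in> cyc (a - b) \<longleftrightarrow> int p dvd j"
    and f: "ham_path2 a b f" and g: "ham_path2 a b g" and disj: "path_arcs f \<inter> path_arcs g = {}"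
  obtains k where "k \<le> p" "cyc (a - b) = cyc (nsmul k a + nsmul (p - k) b)"
    "cyc (a - b) = cyc (nsmul (p - k) a + nsmul k b)"
proof -
  note steps = ham_path2_step[OF f] ham_path2_step[OF g]
  define j0 where "j0 = inv g (f 0)"
  have j0: "g j0 = f 0" unfolding j0_def by (rule ham_path2_f_inv_f[OF g])
  let ?s = "\<lambda>i. f (0 + int i + 1) - f (0 + int i)"
  let ?t = "\<lambda>i. g (j0 + int i + 1) - g (j0 + int i)"
  obtain k where k: "k \<le> p" "(\<Sum>i<p. ?s i) = nsmul k a + nsmul (p - k) b"
    using sum_two_valued[of p ?s a b] steps(1) by blast
  have "g (j0 + int i) - f (int i) \<in> cyc (a - b)" for i
    using cyc_diff[OF walk_diff_in_cyc[of g a b "j0 + int i" j0, OF steps(2)]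
        walk_diff_in_cyc[of f a b "int i" 0, OF steps(1)]] j0 by simp
  then have "?t i = a + b - ?s i" for i
    using arc_disjoint_steps_complementary[OF f g \<open>a \<noteq> b\<close> disj] by simp
  then have "(\<Sum>i<p. ?t i) = nsmul (p - k) a + nsmul k b"
    by (rule sum_complementary_steps[OF k])
  then have "g (int p) - g 0 = nsmul (p - k) a + nsmul k b"
    using sum_steps_telescope[of g j0 p] ham_path2_periodic(1)[OF g \<open>a \<noteq> b\<close> index_dvd, of j0] by simp
  moreover have "f (int p) - f 0 = nsmul k a + nsmul (p - k) b"
    using k(2) sum_steps_telescope[of f 0 p] by simp
  ultimately show thesis
    using that[OF k(1)] ham_path2_periodic(2)[OF f \<open>a \<noteq> b\<close> index_dvd]
      ham_path2_periodic(2)[OF g \<open>a \<noteq> b\<close> index_dvd] by argo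
qed

section \<open>Periodic walks\<close>

text \<open>The walk starting at \<open>0\<close> whose step at time \<open>i\<close> is \<open>\<sigma> (i mod p)\<close>.\<close>

definition periodic_walk :: "(nat \<Rightarrow> 'a::ab_group_add) \<Rightarrow> nat \<Rightarrow> int \<Rightarrow> 'a" where
  "periodic_walk \<sigma> p i = zsmul (i div int p) (\<Sum>r<p. \<sigma> r) + (\<Sum>r<nat (i mod int p). \<sigma> r)"

lemma periodic_walk_eq:
  assumes "0 \<le> r" "r < int p"
  shows "periodic_walk \<sigma> p (t * int p + r) = zsmul t (\<Sum>q<p. \<sigma> q) + (\<Sum>q<nat r. \<sigma> q)"
  using assms by (simp add: periodic_walk_def)

lemma periodic_walk_0 [simp]: "periodic_walk \<sigma> p 0 = 0"
  by (simp add: periodic_walk_def)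

lemma periodic_walk_step:
  assumes "p > 0"
  shows "periodic_walk \<sigma> p (i + 1) - periodic_walk \<sigma> p i = \<sigma> (nat (i mod int p))"
proof -
  define t r where "t = i div int p" and "r = i mod int p"
  have i: "i = t * int p + r" and r: "0 \<le> r" "r < int p"
    using assms by (simp_all add: t_def r_def)
  have walk_i: "periodic_walk \<sigma> p i = zsmul t (\<Sum>q<p. \<sigma> q) + (\<Sum>q<nat r. \<sigma> q)"
    using periodic_walk_eq[OF r] i by simp
  show ?thesis
  proof (cases "r + 1 < int p")
    case True
    then have "periodic_walk \<sigma> p (i + 1) = zsmul t (\<Sum>q<p. \<sigma> q) + (\<Sum>q<nat (r + 1). \<sigma> q)"
      using periodic_walk_eq[of "r + 1" p \<sigma> t] r by (simp add: i add.assoc)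
    moreover have "nat (r + 1) = Suc (nat r)" using r by simp
    ultimately show ?thesis using walk_i by (simp add: r_def)
  next
    case False
    then have p: "p = Suc (nat r)" using r by simp
    have "i + 1 = (t + 1) * int p + 0" using i p r by (simp add: algebra_simps)
    then have "periodic_walk \<sigma> p (i + 1) = zsmul (t + 1) (\<Sum>q<p. \<sigma> q)"
      using periodic_walk_eq[of 0 p \<sigma> "t + 1"] \<open>p > 0\<close> by simp
    also have "\<dots> = zsmul t (\<Sum>q<p. \<sigma> q) + (\<Sum>q<nat r. \<sigma> q) + \<sigma> (nat r)"
      unfolding zsmul_succ by (simp add: p add.assoc)
    finally show ?thesis using walk_i by (simp add: r_def)
  qed
qed

lemma periodic_walk_in_coset:
  assumes "p > 0" "\<And>r. \<sigma> r \<in> {a, b}"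
  shows "periodic_walk \<sigma> p i - zsmul i a \<in> cyc (a - b)"
proof -
  have "periodic_walk \<sigma> p (k + 1) - periodic_walk \<sigma> p k \<in> {a, b}" for k
    using periodic_walk_step[OF \<open>p > 0\<close>, of \<sigma> k] assms(2) by simp
  from walk_diff_in_cyc[of "periodic_walk \<sigma> p" a b i 0, OF this] show ?thesis by simp
qed

lemma periodic_walk_congruent:
  assumes "p > 0" and index_dvd: "\<And>j. zsmul j a \<in> cyc (a - b) \<longleftrightarrow> int p dvd j"
    and "\<And>r. \<sigma> r \<in> {a, b}" "\<And>r. \<tau> r \<in> {a, b}"
    and "periodic_walk \<sigma> p i = periodic_walk \<tau> p j"
  shows "i mod int p = j mod int p"
proof -
  have "zsmul (i - j) a \<in> cyc (a - b)"
    using cyc_diff[OF periodic_walk_in_coset[of p \<tau> a b j, OF \<open>p > 0\<close> assms(4)]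
        periodic_walk_in_coset[of p \<sigma> a b i, OF \<open>p > 0\<close> assms(3)]] assms(5)
    by (simp add: zsmul_diff_left)
  then show ?thesis using index_dvd by (simp add: mod_eq_dvd_iff)
qed

lemma surj_periodic_walk:
  assumes gen: "gen2 a b = UNIV" and "p > 0"
    and index_dvd: "\<And>j. zsmul j a \<in> cyc (a - b) \<longleftrightarrow> int p dvd j"
    and \<sigma>: "\<And>r. \<sigma> r \<in> {a, b}" and period: "cyc (\<Sum>r<p. \<sigma> r) = cyc (a - b)"
  shows "surj (periodic_walk \<sigma> p)"
  unfolding surj_def
proof
  fix x
  let ?F = "periodic_walk \<sigma> p" and ?W = "\<Sum>r<p. \<sigma> r"
  obtain m where m: "x - zsmul m a \<in> cyc (a - b)"
    using exists_zsmul_congruent[OF gen] .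
  define r where "r = m mod int p"
  have r: "0 \<le> r" "r < int p" using \<open>p > 0\<close> by (simp_all add: r_def)
  have "int p dvd m - r" by (simp add: r_def mod_eq_dvd_iff[symmetric])
  then have mr: "zsmul m a - zsmul r a \<in> cyc (a - b)"
    using index_dvd[of "m - r"] by (simp add: zsmul_diff_left)
  have "x - ?F r \<in> cyc ?W"
    using cyc_diff[OF cyc_add[OF m mr] periodic_walk_in_coset[of p \<sigma> a b r, OF \<open>p > 0\<close> \<sigma>]] period
    by (simp add: algebra_simps)
  then obtain t where "x - ?F r = zsmul t ?W" unfolding cyc_def by blast
  moreover have "?F r = (\<Sum>q<nat r. \<sigma> q)"
    using periodic_walk_eq[OF r, of \<sigma> 0] by simp
  ultimately have "x = ?F (t * int p + r)"
    using periodic_walk_eq[OF r, of \<sigma> t] by (simp add: algebra_simps)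
  then show "\<exists>i. x = ?F i" ..
qed

lemma ham_path2_periodic_walk:
  assumes gen: "gen2 a b = UNIV" and "p > 0"
    and index_dvd: "\<And>j. zsmul j a \<in> cyc (a - b) \<longleftrightarrow> int p dvd j"
    and \<sigma>: "\<And>r. \<sigma> r \<in> {a, b}" and period: "cyc (\<Sum>r<p. \<sigma> r) = cyc (a - b)"
    and torsion_free: "\<And>n. zsmul n (\<Sum>r<p. \<sigma> r) = 0 \<Longrightarrow> n = 0"
  shows "ham_path2 a b (periodic_walk \<sigma> p)"
proof -
  let ?F = "periodic_walk \<sigma> p" and ?W = "\<Sum>r<p. \<sigma> r"
  have "inj ?F"
  proof (rule injI)
    fix i j assume eq: "?F i = ?F j"
    then have mod_eq: "i mod int p = j mod int p"
      using periodic_walk_congruent[of p a b \<sigma> \<sigma>, OF \<open>p > 0\<close> index_dvd \<sigma> \<sigma>] by blast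
    then have "zsmul (i div int p) ?W = zsmul (j div int p) ?W"
      using eq by (simp add: periodic_walk_def)
    then have "i div int p = j div int p"
      using torsion_free[of "i div int p - j div int p"] by (simp add: zsmul_diff_left)
    with mod_eq show "i = j" by (metis div_mult_mod_eq)
  qed
  moreover have "?F (i + 1) - ?F i \<in> {a, b}" for i
    using periodic_walk_step[OF \<open>p > 0\<close>, of \<sigma> i] \<sigma> by simp
  ultimately show ?thesis
    using surj_periodic_walk[OF gen \<open>p > 0\<close> index_dvd \<sigma> period] by (simp add: ham_path2_def bij_def)
qed

lemma periodic_walks_arc_disjoint:
  assumes "p > 0" and index_dvd: "\<And>j. zsmul j a \<in> cyc (a - b) \<longleftrightarrow> int p dvd j"
    and \<sigma>: "\<And>r. \<sigma> r \<in> {a, b}" and \<tau>: "\<And>r. \<tau> r \<in> {a, b}" and "\<And>r. \<sigma> r \<noteq> \<tau> r"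
  shows "path_arcs (periodic_walk \<sigma> p) \<inter> path_arcs (periodic_walk \<tau> p) = {}"
proof (rule ccontr)
  assume "path_arcs (periodic_walk \<sigma> p) \<inter> path_arcs (periodic_walk \<tau> p) \<noteq> {}"
  then obtain i j where "periodic_walk \<sigma> p i = periodic_walk \<tau> p j"
    and "periodic_walk \<sigma> p (i + 1) = periodic_walk \<tau> p (j + 1)"
    unfolding path_arcs_def by auto
  moreover from this(1) have "i mod int p = j mod int p"
    by (rule periodic_walk_congruent[of p a b \<sigma> \<tau>, OF \<open>p > 0\<close> index_dvd \<sigma> \<tau>])
  ultimately have "\<sigma> (nat (i mod int p)) = \<tau> (nat (i mod int p))"
    using periodic_walk_step[OF \<open>p > 0\<close>, of \<sigma> i] periodic_walk_step[OF \<open>p > 0\<close>, of \<tau> j] by simp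
  with assms(5) show False by blast
qed

lemma sum_lessThan_if_less:
  "(\<Sum>r<k + l. if r < k then x else y) = nsmul k x + nsmul l (y :: 'a::ab_group_add)"
  by (induction l) (simp_all add: nsmul_eq_sum algebra_simps)

lemma exists_arc_disjoint_ham_paths:
  fixes a b :: "'a::ab_group_add"
  assumes "infinite (UNIV :: 'a set)" and gen: "gen2 a b = UNIV" and "a \<noteq> b"
    and fin: "finite_index (cyc (a - b))" and "p > 0"
    and index_dvd: "\<And>j. zsmul j a \<in> cyc (a - b) \<longleftrightarrow> int p dvd j"
    and "k + l = p" and "cyc (a - b) = cyc (nsmul k a + nsmul l b)"
    and "cyc (a - b) = cyc (nsmul l a + nsmul k b)"
  shows "\<exists>f g. ham_path2 a b f \<and> ham_path2 a b g \<and> path_arcs f \<inter> path_arcs g = {}"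
proof -
  define \<sigma> \<tau> where "\<sigma> r = (if r < k then a else b)" and "\<tau> r = (if r < k then b else a)" for r
  have \<sigma>: "\<sigma> r \<in> {a, b}" and \<tau>: "\<tau> r \<in> {a, b}" and "\<sigma> r \<noteq> \<tau> r" for r
    using \<open>a \<noteq> b\<close> by (simp_all add: \<sigma>_def \<tau>_def)
  have "(\<Sum>r<p. \<sigma> r) = nsmul k a + nsmul l b" "(\<Sum>r<p. \<tau> r) = nsmul l a + nsmul k b"
    using sum_lessThan_if_less[of k a b l] sum_lessThan_if_less[of k b a l]
    by (simp_all add: \<sigma>_def \<tau>_def add.commute flip: \<open>k + l = p\<close>)
  then have periods: "cyc (\<Sum>r<p. \<sigma> r) = cyc (a - b)" "cyc (\<Sum>r<p. \<tau> r) = cyc (a - b)"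
    using assms(8,9) by simp_all
  have torsion_free: "zsmul n w = 0 \<Longrightarrow> n = 0" if "cyc w = cyc (a - b)" for n w
    using zsmul_eq_0_iff_if_finite_index[OF \<open>infinite UNIV\<close>] fin that by metis
  have "ham_path2 a b (periodic_walk \<sigma> p)" "ham_path2 a b (periodic_walk \<tau> p)"
    using ham_path2_periodic_walk[OF gen \<open>p > 0\<close> index_dvd \<sigma> periods(1) torsion_free[OF periods(1)]]
      ham_path2_periodic_walk[OF gen \<open>p > 0\<close> index_dvd \<tau> periods(2) torsion_free[OF periods(2)]]
    by simp_all
  moreover have "path_arcs (periodic_walk \<sigma> p) \<inter> path_arcs (periodic_walk \<tau> p) = {}"
    by (rule periodic_walks_arc_disjoint[OF \<open>p > 0\<close> index_dvd \<sigma> \<tau> \<open>\<And>r. \<sigma> r \<noteq> \<tau> r\<close>])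
  ultimately show ?thesis by blast
qed

theorem mainTheorem16:
  fixes a b :: "'a::ab_group_add"
  assumes "infinite (UNIV :: 'a set)"
    and "gen2 a b = UNIV"
    and "a \<noteq> b"
  shows "(\<exists>f g. ham_path2 a b f \<and> ham_path2 a b g \<and> path_arcs f \<inter> path_arcs g = {})
     \<longleftrightarrow> (finite_index (cyc (a - b)) \<and>
          (\<exists>k l. k \<in> {0..index (cyc (a - b))} \<and> l \<in> {0..index (cyc (a - b))} \<and>
               k + l = index (cyc (a - b)) \<and>
               cyc (a - b) = cyc (zsmul (int k) a + zsmul (int l) b) \<and>
               cyc (a - b) = cyc (zsmul (int l) a + zsmul (int k) b)))"
proof -
  let ?H = "cyc (a - b)"
  have index_dvd: "zsmul j a \<in> ?H \<longleftrightarrow> int (index ?H) dvd j" and index_pos: "0 < index ?H"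
    if "finite_index ?H" for j
    using exists_zsmul_in_cyc_if_finite_index[OF that] index_cyc_diff[OF assms(2)] by metis+
  show ?thesis (is "?L \<longleftrightarrow> ?R")
  proof
    assume ?L
    then obtain f g where f: "ham_path2 a b f" and g: "ham_path2 a b g"
      and disj: "path_arcs f \<inter> path_arcs g = {}" by blast
    obtain j where "j \<noteq> 0" "zsmul j a \<in> ?H"
      using ham_path2_reaches_translate[OF f assms(3)] by metis
    then have fin: "finite_index ?H" by (rule index_cyc_diff(1)[OF assms(2)])
    obtain k where "k \<le> index ?H" "?H = cyc (nsmul k a + nsmul (index ?H - k) b)"
      "?H = cyc (nsmul (index ?H - k) a + nsmul k b)"
      using arc_disjoint_ham_paths_imp[OF assms(3) index_dvd[OF fin] f g disj] by blast
    moreover have "k \<in> {0..index ?H}" "index ?H - k \<in> {0..index ?H}" "k + (index ?H - k) = index ?H"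
      using \<open>k \<le> index ?H\<close> by simp_all
    ultimately show ?R using fin unfolding zsmul_of_nat by blast
  next
    assume ?R
    then obtain k l where fin: "finite_index ?H" and kl: "k + l = index ?H"
      "?H = cyc (nsmul k a + nsmul l b)" "?H = cyc (nsmul l a + nsmul k b)" by auto
    show ?L by (rule exists_arc_disjoint_ham_paths[OF assms fin index_pos[OF fin] index_dvd[OF fin] kl])
  qed
qed

end
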